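(* Let $\pi\in\mathfrak{S}_n$ avoid $231$. If $(a,b)$ and $(c,d)$ are $2$-cycles in the disjoint cycle decomposition of $\pi$ with $a<b$, $c<d$ and $a<c$, then either $b<c$ or $b>d$.
   Context: A permutation avoids $231$ if there are no indices $i<j<k$ with $\pi_k<\pi_i<\pi_j$. *)

theory Defs
  imports "HOL-Combinatorics.Permutations"
begin

definition avoids_231 :: "nat \<Rightarrow> (nat \<Rightarrow> nat) \<Rightarrow> bool" where
  "avoids_231 n p \<longleftrightarrow>
     \<not> (\<exists>i j k. i \<in> {1..n} \<and> j \<in> {1..n} \<and> k \<in> {1..n} \<and> i < j \<and> j < k \<and>
                 p k < p i \<and> p i < p j)"

end

theory Submission
  imports Defs
begin

lemma avoids_231D:
  assumes "avoids_231 n p"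
    and "i \<in> {1..n}" and "j \<in> {1..n}" and "k \<in> {1..n}"
    and "i < j" and "j < k" and "p k < p i"
  shows "p j \<le> p i"
  using assms leI unfolding avoids_231_def by blast

theorem lemma3p2:
  fixes n :: nat and p :: "nat \<Rightarrow> nat" and a b c d :: nat
  assumes "p permutes {1..n}"
    and "avoids_231 n p"
    and "p a = b" and "p b = a" and "a < b"
    and "p c = d" and "p d = c" and "c < d"
    and "a < c"
  shows "b < c \<or> b > d"
proof (rule ccontr)
  assume "\<not> (b < c \<or> b > d)"
  moreover have "b \<noteq> c" and "b \<noteq> d" using assms by auto
  ultimately have "c < b" and "b < d" by auto
  have "a \<in> {1..n}" using permutes_not_in[OF assms(1), of a] assms(3,5) by auto
  moreover have "b \<in> {1..n}" using permutes_not_in[OF assms(1), of b] assms(4,5) by auto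
  moreover have "c \<in> {1..n}" using permutes_not_in[OF assms(1), of c] assms(6,8) by auto
  \<comment> \<open>the positions a < c < b carry the values b, d, a: a 231 pattern\<close>
  ultimately have "p c \<le> p a"
    using avoids_231D[OF assms(2), of a c b] \<open>a < c\<close> \<open>c < b\<close> assms(3,4,5) by simp
  with \<open>b < d\<close> assms(3,6) show False by simp
qed

end
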